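(* Let $I_n$ denote the number of inversion sequences of length $n$ avoiding all of the patterns $100$, $102$, $201$ (with $I_0=1$). Then $$\sum_{n\ge0} I_n z^n=\frac{2+z-10z^2+4z^3-(2-3z)\sqrt{1-4z-4z^2}}{8z(1-z)^2}.$$
   Context: An inversion sequence of length $n$ is an integer sequence $(a_1,\dots,a_n)$ with $0\le a_i<i$ for all $i$. A pattern is a sequence $\sigma$ of non-negative integers containing every value from $0$ to $\max(\sigma)$; the reduction of a sequence replaces its smallest values by $0$, the next smallest by $1$, etc. A sequence $a$ contains $\sigma$ if some (not necessarily consecutive) subsequence of $a$ has reduction $\sigma$; otherwise $a$ avoids $\sigma$. Equivalently, these are the inversion sequences with no $i<j<k$ such that $a_i>a_j$, $a_j\le a_k$ and $a_i\ne a_k$. The square root is the power series with constant term $1$. *)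

theory Defs
  imports "HOL-Computational_Algebra.Formal_Power_Series"
begin

text \<open>Inversion sequence of length n (0-based indexing): a ! i < i + 1, i.e. 0 <= a_i < i in 1-based indexing.\<close>
definition inv_seq :: "nat list \<Rightarrow> bool" where
  "inv_seq a \<longleftrightarrow> (\<forall>i < length a. a ! i < Suc i)"

definition reduction :: "nat list \<Rightarrow> nat list" where
  "reduction s = map (\<lambda>x. card {y \<in> set s. y < x}) s"

definition contains_pattern :: "nat list \<Rightarrow> nat list \<Rightarrow> bool" where
  "contains_pattern a \<sigma> \<longleftrightarrow> (\<exists>t \<in> set (subseqs a). reduction t = \<sigma>)"

definition avoids :: "nat list \<Rightarrow> nat list \<Rightarrow> bool" where
  "avoids a \<sigma> \<longleftrightarrow> \<not> contains_pattern a \<sigma>"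

definition I_count :: "nat \<Rightarrow> nat" where
  "I_count n = card {a. length a = n \<and> inv_seq a \<and> avoids a [1,0,0] \<and> avoids a [1,0,2] \<and> avoids a [2,0,1]}"

end

(*
  An inversion sequence avoids 100, 102 and 201 iff it is admissible: whenever i < j < k and
  a_j < a_i, either a_k < a_j or a_k = a_i.  An admissible sequence is either weakly increasing,
  or it splits at its first descent as w @ b # r with w weakly increasing and b < last w; then r
  is a block of copies of last w followed by a strictly decreasing run below b, and the block
  may be nonempty only if last w is the only entry of w above b.  Counting the runs by binomial
  coefficients expresses I_n through binomial sums over the weakly increasing inversion
  sequences w, which are the coefficients of polynomials in u = 1 + X.  Appending one entry to w
  gives linear recurrences for these polynomials; summed over the length of w they become linear
  equations for three generating functions, in which the generating function C = sorted_inv_fps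
  of weakly increasing inversion sequences appears composed with X (1 + X).  The same recurrence
  at u = 1 - X telescopes and shows C = 1 + X C^2.  Eliminating the auxiliary series leaves a
  quadratic equation with discriminant 1 - 4X - 4X^2.
*)

theory Submission
  imports Defs "HOL-Library.Sublist"
begin

unbundle fps_syntax

section \<open>Pattern avoidance as a condition on triples\<close>

lemma reduction_triple:
  "reduction [x, y, z] =
     [card {s \<in> {x, y, z}. s < x}, card {s \<in> {x, y, z}. s < y}, card {s \<in> {x, y, z}. s < z}]"
  by (simp add: reduction_def)

lemma card_less_in_triple:
  "card {s \<in> {x, y, z :: nat}. s < t} =
     of_bool (x < t) + of_bool (y < t \<and> y \<noteq> x) + of_bool (z < t \<and> z \<noteq> x \<and> z \<noteq> y)"
proof -
  have "{s \<in> {x, y, z}. s < t} =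
      (if x < t then {x} else {}) \<union> (if y < t then {y} else {}) \<union> (if z < t then {z} else {})"
    by auto
  then show ?thesis by (auto simp: card_insert_if)
qed

lemma reduction_eq_100_iff: "reduction [x, y, z] = [1, 0, 0] \<longleftrightarrow> y < x \<and> z = y"
  unfolding reduction_triple card_less_in_triple by auto

lemma reduction_eq_102_iff: "reduction [x, y, z] = [1, 0, 2] \<longleftrightarrow> y < x \<and> x < z"
  unfolding reduction_triple card_less_in_triple by auto

lemma reduction_eq_201_iff: "reduction [x, y, z] = [2, 0, 1] \<longleftrightarrow> y < z \<and> z < x"
  unfolding reduction_triple card_less_in_triple by auto

lemma subseq_Cons_iff_nth:
  "subseq (x # xs) ys \<longleftrightarrow> (\<exists>i < length ys. ys ! i = x \<and> subseq xs (drop (Suc i) ys))"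
proof
  assume "subseq (x # xs) ys"
  then obtain us vs where "ys = us @ x # vs" "subseq xs vs"
    by (auto dest: list_emb_ConsD)
  then show "\<exists>i < length ys. ys ! i = x \<and> subseq xs (drop (Suc i) ys)"
    by (intro exI[of _ "length us"]) simp
next
  assume "\<exists>i < length ys. ys ! i = x \<and> subseq xs (drop (Suc i) ys)"
  then obtain i where i: "i < length ys" "ys ! i = x" "subseq xs (drop (Suc i) ys)"
    by blast
  then have "subseq (x # xs) (take i ys @ ys ! i # drop (Suc i) ys)"
    by auto
  then show "subseq (x # xs) ys"
    using i(1) by (simp add: id_take_nth_drop[symmetric])
qed

lemma subseq_triple_iff_nth:
  "subseq [x, y, z] a \<longleftrightarrow>
     (\<exists>i j k. i < j \<and> j < k \<and> k < length a \<and> a ! i = x \<and> a ! j = y \<and> a ! k = z)"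
proof
  assume "subseq [x, y, z] a"
  then obtain i where i: "i < length a" "a ! i = x" "subseq [y, z] (drop (Suc i) a)"
    by (auto dest: subseq_Cons_iff_nth[THEN iffD1])
  then obtain j where j: "j < length (drop (Suc i) a)" "drop (Suc i) a ! j = y"
      "subseq [z] (drop (Suc j) (drop (Suc i) a))"
    by (auto dest: subseq_Cons_iff_nth[THEN iffD1])
  then obtain k where k: "k < length (drop (Suc j) (drop (Suc i) a))" "drop (Suc j) (drop (Suc i) a) ! k = z"
    by (auto dest: subseq_Cons_iff_nth[THEN iffD1])
  have "i < Suc i + j" "Suc i + j < Suc i + Suc j + k" "Suc i + Suc j + k < length a"
    "a ! (Suc i + j) = y" "a ! (Suc i + Suc j + k) = z"
    using j k by (simp_all add: ac_simps)
  with i(2) show "\<exists>i j k. i < j \<and> j < k \<and> k < length a \<and> a ! i = x \<and> a ! j = y \<and> a ! k = z"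
    by blast
next
  assume "\<exists>i j k. i < j \<and> j < k \<and> k < length a \<and> a ! i = x \<and> a ! j = y \<and> a ! k = z"
  then obtain i j k where ijk: "i < j" "j < k" "k < length a" "a ! i = x" "a ! j = y" "a ! k = z"
    by blast
  have "subseq [z] (drop (Suc j) a)"
    using ijk by (intro subseq_Cons_iff_nth[THEN iffD2] exI[of _ "k - Suc j"]) simp
  then have "subseq [y, z] (drop (Suc i) a)"
    using ijk by (intro subseq_Cons_iff_nth[THEN iffD2] exI[of _ "j - Suc i"]) simp
  then show "subseq [x, y, z] a"
    using ijk by (intro subseq_Cons_iff_nth[THEN iffD2] exI[of _ i]) simp
qed

lemma contains_triple_pattern_iff:
  "contains_pattern a [p, q, r] \<longleftrightarrow>
    (\<exists>i j k. i < j \<and> j < k \<and> k < length a \<and> reduction [a ! i, a ! j, a ! k] = [p, q, r])"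
proof
  assume "contains_pattern a [p, q, r]"
  then obtain t where t: "subseq t a" "reduction t = [p, q, r]"
    unfolding contains_pattern_def by auto
  have "length t = length (reduction t)"
    by (simp add: reduction_def)
  then have "length t = Suc (Suc (Suc 0))"
    using t(2) by simp
  then obtain x y z where xyz: "t = [x, y, z]"
    by (auto simp: length_Suc_conv)
  from t(1) have "subseq [x, y, z] a"
    unfolding xyz .
  then obtain i j k where ijk: "i < j" "j < k" "k < length a" "a ! i = x" "a ! j = y" "a ! k = z"
    unfolding subseq_triple_iff_nth by blast
  from t(2) have "reduction [a ! i, a ! j, a ! k] = [p, q, r]"
    unfolding xyz ijk(4-6) .
  with ijk(1-3) show "\<exists>i j k. i < j \<and> j < k \<and> k < length a \<and> reduction [a ! i, a ! j, a ! k] = [p, q, r]"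
    by blast
next
  assume "\<exists>i j k. i < j \<and> j < k \<and> k < length a \<and> reduction [a ! i, a ! j, a ! k] = [p, q, r]"
  then obtain i j k where "i < j" "j < k" "k < length a" "reduction [a ! i, a ! j, a ! k] = [p, q, r]"
    by blast
  moreover from this have "subseq [a ! i, a ! j, a ! k] a"
    unfolding subseq_triple_iff_nth by blast
  ultimately show "contains_pattern a [p, q, r]"
    unfolding contains_pattern_def by auto
qed

definition admissible :: "nat list \<Rightarrow> bool" where
  "admissible a \<longleftrightarrow>
     (\<forall>i j k. i < j \<longrightarrow> j < k \<longrightarrow> k < length a \<longrightarrow> a ! j < a ! i \<longrightarrow> a ! k < a ! j \<or> a ! k = a ! i)"

lemma avoids_iff_admissible:
  "avoids a [1, 0, 0] \<and> avoids a [1, 0, 2] \<and> avoids a [2, 0, 1] \<longleftrightarrow> admissible a"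
proof -
  have bad_triple: "y < x \<and> \<not> (z < y \<or> z = x) \<longleftrightarrow>
      (y < x \<and> z = y) \<or> (y < x \<and> x < z) \<or> (y < z \<and> z < x)" for x y z :: nat
    by auto
  have "admissible a \<longleftrightarrow> \<not> (\<exists>i j k. i < j \<and> j < k \<and> k < length a \<and>
      (a ! j < a ! i \<and> \<not> (a ! k < a ! j \<or> a ! k = a ! i)))"
    unfolding admissible_def by blast
  also have "\<dots> \<longleftrightarrow> avoids a [1, 0, 0] \<and> avoids a [1, 0, 2] \<and> avoids a [2, 0, 1]"
    unfolding bad_triple avoids_def contains_triple_pattern_iff reduction_eq_100_iff reduction_eq_102_iff reduction_eq_201_iff
    by blast
  finally show ?thesis ..
qed

lemma sorted_admissible: "sorted a \<Longrightarrow> admissible a"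
  unfolding admissible_def by (meson leD less_imp_le_nat order.strict_trans sorted_nth_mono)

section \<open>Weakly increasing inversion sequences\<close>

lemma inv_seq_snoc: "inv_seq (w @ [x]) \<longleftrightarrow> inv_seq w \<and> x \<le> length w"
  unfolding inv_seq_def by (auto simp: nth_append less_Suc_eq)

lemma inv_seq_appendD: "inv_seq (w @ ys) \<Longrightarrow> inv_seq w"
  unfolding inv_seq_def by (metis length_append nth_append trans_less_add1)

lemma inv_seq_append:
  assumes "inv_seq w" "set ys \<subseteq> {..length w}"
  shows "inv_seq (w @ ys)"
  unfolding inv_seq_def
proof (intro allI impI)
  fix i assume "i < length (w @ ys)"
  show "(w @ ys) ! i < Suc i"
  proof (cases "i < length w")
    case False
    with \<open>i < length (w @ ys)\<close> have "ys ! (i - length w) \<in> set ys"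
      by simp
    with False assms(2) show ?thesis
      by (auto simp: nth_append)
  qed (use assms(1) in \<open>simp add: inv_seq_def nth_append\<close>)
qed

lemma inv_seq_set_subset: "inv_seq w \<Longrightarrow> set w \<subseteq> {..<length w}"
  unfolding inv_seq_def by (auto simp: in_set_conv_nth) (meson less_trans_Suc not_less_eq)

lemma inv_seq_last_less: "inv_seq w \<Longrightarrow> w \<noteq> [] \<Longrightarrow> last w < length w"
  using inv_seq_set_subset last_in_set by (metis lessThan_iff subsetD)

lemma sorted_le_last: "sorted w \<Longrightarrow> x \<in> set w \<Longrightarrow> x \<le> last w"
  by (induction w rule: rev_induct) (auto simp: sorted_append)

definition sorted_inv_seqs :: "nat \<Rightarrow> nat list set" where
  "sorted_inv_seqs p = {w. length w = p \<and> inv_seq w \<and> sorted w}"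

lemma finite_sorted_inv_seqs: "finite (sorted_inv_seqs p)"
proof (rule finite_subset)
  show "sorted_inv_seqs p \<subseteq> {w. set w \<subseteq> {..<p} \<and> length w = p}"
    unfolding sorted_inv_seqs_def using inv_seq_set_subset by auto
qed (rule finite_lists_length_eq, simp)

lemma sorted_inv_seqs_0: "sorted_inv_seqs 0 = {[]}"
  unfolding sorted_inv_seqs_def inv_seq_def by auto

lemma sorted_inv_seqs_Suc_0: "sorted_inv_seqs (Suc 0) = {[0]}"
  unfolding sorted_inv_seqs_def inv_seq_def by (auto simp: length_Suc_conv)

lemma sorted_inv_seqs_Suc:
  assumes "0 < p"
  shows "sorted_inv_seqs (Suc p) = (\<lambda>(w, x). w @ [x]) ` (SIGMA w:sorted_inv_seqs p. {last w..p})"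
proof (intro set_eqI iffI)
  fix a assume "a \<in> sorted_inv_seqs (Suc p)"
  then have a: "length a = Suc p" "inv_seq a" "sorted a"
    unfolding sorted_inv_seqs_def by auto
  then obtain w x where ax: "a = w @ [x]"
    by (cases a rule: rev_exhaust) auto
  with a assms have w: "length w = p" "w \<noteq> []" "inv_seq w" "sorted w" "x \<le> p" "\<forall>y\<in>set w. y \<le> x"
    by (auto simp: inv_seq_snoc sorted_append)
  then have "last w \<le> x"
    by simp
  with w ax show "a \<in> (\<lambda>(w, x). w @ [x]) ` (SIGMA w:sorted_inv_seqs p. {last w..p})"
    unfolding sorted_inv_seqs_def by auto
next
  fix a assume "a \<in> (\<lambda>(w, x). w @ [x]) ` (SIGMA w:sorted_inv_seqs p. {last w..p})"
  then obtain w x where a: "a = w @ [x]" "w \<in> sorted_inv_seqs p" "last w \<le> x" "x \<le> p"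
    by auto
  then have "\<forall>y\<in>set w. y \<le> x"
    using sorted_le_last unfolding sorted_inv_seqs_def by fastforce
  with a show "a \<in> sorted_inv_seqs (Suc p)"
    unfolding sorted_inv_seqs_def by (auto simp: inv_seq_snoc sorted_append)
qed

lemma sum_sorted_inv_seqs_Suc:
  assumes "0 < p"
  shows "(\<Sum>a\<in>sorted_inv_seqs (Suc p). f a) = (\<Sum>w\<in>sorted_inv_seqs p. \<Sum>x=last w..p. f (w @ [x]))"
proof -
  have "inj_on (\<lambda>(w, x). w @ [x]) (SIGMA w:sorted_inv_seqs p. {last w..p})"
    by (auto simp: inj_on_def)
  then have "(\<Sum>a\<in>sorted_inv_seqs (Suc p). f a) =
      (\<Sum>(w, x)\<in>(SIGMA w:sorted_inv_seqs p. {last w..p}). f (w @ [x]))"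
    unfolding sorted_inv_seqs_Suc[OF assms] by (subst sum.reindex) (auto simp: case_prod_beta)
  also have "\<dots> = (\<Sum>w\<in>sorted_inv_seqs p. \<Sum>x=last w..p. f (w @ [x]))"
    by (rule sum.Sigma[symmetric]) (auto simp: finite_sorted_inv_seqs)
  finally show ?thesis .
qed

lemma sorted_inv_seqs_last_less: "w \<in> sorted_inv_seqs p \<Longrightarrow> 0 < p \<Longrightarrow> last w < p"
  unfolding sorted_inv_seqs_def using inv_seq_last_less by auto

section \<open>Decomposition at the first descent\<close>

definition only_last_above :: "nat list \<Rightarrow> nat \<Rightarrow> bool" where
  "only_last_above w b \<longleftrightarrow> (\<forall>x\<in>set w. b < x \<longrightarrow> x = last w)"

definition admissible_tails :: "nat \<Rightarrow> nat \<Rightarrow> bool \<Rightarrow> nat \<Rightarrow> nat list set" where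
  "admissible_tails v b e s = {r. length r = s \<and>
     (\<exists>k D. r = replicate k v @ D \<and> (0 < k \<longrightarrow> e) \<and> sorted_wrt (>) D \<and> set D \<subseteq> {..<b})}"

lemma replicate_append_decreasingD:
  fixes b v :: "'a::linorder"
  assumes "b < v" and r: "r = replicate k v @ D" "sorted_wrt (>) D" "set D \<subseteq> {..<b}"
  shows "\<forall>t < length r. r ! t < b \<or> r ! t = v"
    and "\<forall>s t. s < t \<longrightarrow> t < length r \<longrightarrow> r ! s < b \<longrightarrow> r ! t < r ! s"
proof -
  have len: "length r = k + length D"
    using r(1) by simp
  have r_nth: "r ! t = (if t < k then v else D ! (t - k))" if "t < length r" for t
    using that r(1) by (simp add: nth_append)
  show "\<forall>t < length r. r ! t < b \<or> r ! t = v"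
  proof (intro allI impI)
    fix t assume t: "t < length r"
    show "r ! t < b \<or> r ! t = v"
    proof (cases "t < k")
      case False
      then have "D ! (t - k) \<in> set D"
        using t len by simp
      with False show ?thesis
        using r(3) r_nth[OF t] by auto
    qed (simp add: r_nth[OF t])
  qed
  show "\<forall>s t. s < t \<longrightarrow> t < length r \<longrightarrow> r ! s < b \<longrightarrow> r ! t < r ! s"
  proof (intro allI impI)
    fix s t assume st: "s < t" "t < length r" "r ! s < b"
    have "\<not> s < k"
    proof
      assume "s < k"
      then have "r ! s = v"
        using st r_nth by simp
      with st(3) assms(1) show False
        by simp
    qed
    then have "D ! (t - k) < D ! (s - k)"
      using st len by (intro sorted_wrt_nth_less[OF r(2)]) auto
    then show "r ! t < r ! s"
      using st \<open>\<not> s < k\<close> r_nth by simp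
  qed
qed

lemma replicate_append_decreasing_split:
  fixes b v :: "'a::linorder"
  assumes entries: "\<forall>t < length r. r ! t < b \<or> r ! t = v"
    and decreasing: "\<forall>s t. s < t \<longrightarrow> t < length r \<longrightarrow> r ! s < b \<longrightarrow> r ! t < r ! s"
  shows "\<exists>k D. r = replicate k v @ D \<and> sorted_wrt (>) D \<and> set D \<subseteq> {..<b}"
proof -
  define k where "k = length (takeWhile (\<lambda>x. x = v) r)"
  define D where "D = dropWhile (\<lambda>x. x = v) r"
  have r_eq: "r = replicate k v @ D"
    unfolding k_def D_def
    by (metis (mono_tags) replicate_length_same set_takeWhileD takeWhile_dropWhile_id)
  have D_nth: "D ! m = r ! (k + m)" if "m < length D" for m
    using that r_eq by (simp add: nth_append)
  have D_0: "D ! 0 < b" if "D \<noteq> []"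
  proof -
    have "D ! 0 \<noteq> v"
      using hd_dropWhile[of "\<lambda>x. x = v" r] that unfolding D_def by (simp add: hd_conv_nth)
    moreover have "k < length r"
      using that r_eq by simp
    then have "r ! k < b \<or> r ! k = v"
      using entries by blast
    ultimately show ?thesis
      using that D_nth[of 0] by simp
  qed
  have D_less: "D ! m < b" if "m < length D" for m
  proof (cases m)
    case (Suc m')
    have "D \<noteq> []" "k + m < length r"
      using that r_eq by auto
    then have "r ! (k + m) < r ! k" "r ! k < b"
      using D_0 D_nth[of 0] decreasing Suc by auto
    then show ?thesis
      using D_nth[OF that] by simp
  qed (use D_0 that in auto)
  have "sorted_wrt (>) D"
    unfolding sorted_wrt_iff_nth_less using decreasing D_less D_nth r_eq by fastforce
  moreover have "set D \<subseteq> {..<b}"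
    using D_less by (auto simp: in_set_conv_nth)
  ultimately show ?thesis
    using r_eq by blast
qed

lemma admissible_appendD:
  assumes w: "w \<noteq> []" and b: "b < last w" and adm: "admissible (w @ b # r)"
  shows "\<forall>t < length r. r ! t < b \<or> r ! t = last w"
    and "\<forall>s t. s < t \<longrightarrow> t < length r \<longrightarrow> r ! s < b \<longrightarrow> r ! t < r ! s"
    and "last w \<in> set r \<Longrightarrow> only_last_above w b"
proof -
  let ?a = "w @ b # r" and ?p = "length w"
  have triple: "?a ! l < ?a ! j \<or> ?a ! l = ?a ! i" if "i < j" "j < l" "l < length ?a" "?a ! j < ?a ! i" for i j l
    using adm that unfolding admissible_def by blast
  have a_r: "?a ! Suc (?p + t) = r ! t" for t
    by (simp add: nth_append)
  have a_last: "?a ! (?p - 1) = last w" and a_b: "?a ! ?p = b"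
    using w by (simp_all add: nth_append last_conv_nth)
  show entries: "\<forall>t < length r. r ! t < b \<or> r ! t = last w"
  proof (intro allI impI)
    fix t assume "t < length r"
    then show "r ! t < b \<or> r ! t = last w"
      using triple[of "?p - 1" ?p "Suc (?p + t)"] w b a_r a_last a_b by simp
  qed
  show "\<forall>s t. s < t \<longrightarrow> t < length r \<longrightarrow> r ! s < b \<longrightarrow> r ! t < r ! s"
  proof (intro allI impI)
    fix s t assume "s < t" "t < length r" "r ! s < b"
    then show "r ! t < r ! s"
      using triple[of ?p "Suc (?p + s)" "Suc (?p + t)"] entries b a_r a_b by auto
  qed
  assume "last w \<in> set r"
  then obtain t where t: "t < length r" "r ! t = last w"
    by (auto simp: in_set_conv_nth)
  show "only_last_above w b"
    unfolding only_last_above_def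
  proof (intro ballI impI)
    fix x assume "x \<in> set w" "b < x"
    then obtain i where "i < ?p" "w ! i = x"
      by (auto simp: in_set_conv_nth)
    then show "x = last w"
      using triple[of i ?p "Suc (?p + t)"] t b \<open>b < x\<close> a_r a_b by (simp add: nth_append)
  qed
qed

lemma set_append_Cons_le_last:
  assumes "sorted w" "b < last w" "\<forall>t < length r. r ! t < b \<or> r ! t = last w"
  shows "set (w @ b # r) \<subseteq> {..last w}"
proof -
  have "set r \<subseteq> {..last w}"
  proof
    fix x assume "x \<in> set r"
    then obtain t where "t < length r" "r ! t = x"
      by (auto simp: in_set_conv_nth)
    then show "x \<in> {..last w}"
      using assms(2,3) by fastforce
  qed
  then show ?thesis
    using sorted_le_last[OF assms(1)] assms(2) by auto
qed

lemma admissible_appendI: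
  assumes w: "sorted w" "w \<noteq> []" and b: "b < last w"
    and entries: "\<forall>t < length r. r ! t < b \<or> r ! t = last w"
    and decreasing: "\<forall>s t. s < t \<longrightarrow> t < length r \<longrightarrow> r ! s < b \<longrightarrow> r ! t < r ! s"
    and last_above: "last w \<in> set r \<Longrightarrow> only_last_above w b"
  shows "admissible (w @ b # r)"
  unfolding admissible_def
proof (intro allI impI)
  fix i j l
  let ?a = "w @ b # r" and ?p = "length w"
  assume ij: "i < j" and jl: "j < l" and l: "l < length ?a" and desc: "?a ! j < ?a ! i"
  have a_w: "?a ! m = w ! m" if "m < ?p" for m
    using that by (simp add: nth_append)
  have a_b: "?a ! ?p = b" and a_r: "?a ! Suc (?p + t) = r ! t" for t
    by (simp_all add: nth_append)
  have "set ?a \<subseteq> {..last w}"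
    using set_append_Cons_le_last[OF w(1) b entries] .
  moreover have "?a ! i \<in> set ?a"
    using ij jl l by (intro nth_mem) simp
  ultimately have a_le: "?a ! i \<le> last w"
    by blast
  define tl where "tl = l - Suc ?p"
  consider "j < ?p" | "j = ?p" | "?p < j"
    by linarith
  then show "?a ! l < ?a ! j \<or> ?a ! l = ?a ! i"
  proof cases
    case 1
    then have "?a ! i \<le> ?a ! j"
      using ij a_w sorted_nth_mono[OF w(1), of i j] by simp
    with desc show ?thesis
      by simp
  next
    case 2
    have tl: "l = Suc (?p + tl)" "tl < length r"
      using jl l 2 unfolding tl_def by auto
    have "w ! i \<in> set w" "b < w ! i"
      using ij desc 2 a_w a_b by auto
    moreover have "r ! tl < b \<or> r ! tl = last w"
      using entries tl(2) by blast
    moreover have "w ! i = last w" if "r ! tl = last w"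
      using that last_above nth_mem[OF tl(2)] \<open>w ! i \<in> set w\<close> \<open>b < w ! i\<close>
      unfolding only_last_above_def by auto
    ultimately show ?thesis
      using tl ij 2 a_w a_b a_r by auto
  next
    case 3
    define tj where "tj = j - Suc ?p"
    have t: "j = Suc (?p + tj)" "l = Suc (?p + tl)" "tj < tl" "tl < length r"
      using 3 jl l unfolding tj_def tl_def by auto
    then have "r ! tj \<noteq> last w"
      using desc a_le a_r by auto
    moreover have "r ! tj < b \<or> r ! tj = last w"
      using entries t by simp
    ultimately have "r ! tj < b"
      by simp
    then show ?thesis
      using decreasing t a_r by simp
  qed
qed

lemma admissible_append_iff:
  assumes "sorted w" "w \<noteq> []" "b < last w"
  shows "admissible (w @ b # r) \<longleftrightarrow> r \<in> admissible_tails (last w) b (only_last_above w b) (length r)"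
proof
  assume adm: "admissible (w @ b # r)"
  from replicate_append_decreasing_split[OF admissible_appendD(1,2)[OF assms(2,3) adm]]
  obtain k D where kD: "r = replicate k (last w) @ D" "sorted_wrt (>) D" "set D \<subseteq> {..<b}"
    by blast
  moreover have "0 < k \<longrightarrow> only_last_above w b"
    using admissible_appendD(3)[OF assms(2,3) adm] kD(1) by auto
  ultimately show "r \<in> admissible_tails (last w) b (only_last_above w b) (length r)"
    unfolding admissible_tails_def by blast
next
  assume "r \<in> admissible_tails (last w) b (only_last_above w b) (length r)"
  then obtain k D where kD: "r = replicate k (last w) @ D" "sorted_wrt (>) D" "set D \<subseteq> {..<b}"
    and "0 < k \<longrightarrow> only_last_above w b"
    unfolding admissible_tails_def by blast
  have "last w \<notin> set D"
    using kD(3) assms(3) by auto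
  have "only_last_above w b" if "last w \<in> set r"
  proof -
    have "k \<noteq> 0"
      using that kD(1) \<open>last w \<notin> set D\<close> by auto
    with \<open>0 < k \<longrightarrow> only_last_above w b\<close> show ?thesis
      by simp
  qed
  then show "admissible (w @ b # r)"
    by (rule admissible_appendI[OF assms replicate_append_decreasingD[OF assms(3) kD]])
qed

lemma card_strict_decreasing_lists:
  fixes A :: "'a::linorder set"
  assumes "finite A"
  shows "card {D. length D = l \<and> sorted_wrt (>) D \<and> set D \<subseteq> A} = card A choose l"
proof -
  let ?L = "{D. length D = l \<and> sorted_wrt (>) D \<and> set D \<subseteq> A}"
  have decr_iff: "sorted_wrt (>) D \<longleftrightarrow> sorted_wrt (<) (rev D)" for D :: "'a list"
    by (simp add: sorted_wrt_rev)
  have inj: "inj_on set ?L"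
  proof (rule inj_onI)
    fix D D' assume "D \<in> ?L" "D' \<in> ?L" and eq: "set D = set D'"
    then have "sorted_wrt (<) (rev D)" "sorted_wrt (<) (rev D')"
      unfolding decr_iff by simp_all
    then have "rev D = rev D'"
      using strict_sorted_equal[of "rev D'" "rev D"] eq by simp
    then show "D = D'"
      by simp
  qed
  have image: "set ` ?L = {B. B \<subseteq> A \<and> card B = l}"
  proof (intro set_eqI iffI)
    fix B assume "B \<in> set ` ?L"
    then obtain D where "D \<in> ?L" "B = set D"
      by blast
    moreover from this have "distinct D"
      unfolding decr_iff by (simp add: strict_sorted_iff)
    ultimately show "B \<in> {B. B \<subseteq> A \<and> card B = l}"
      by (simp add: distinct_card)
  next
    fix B assume B: "B \<in> {B. B \<subseteq> A \<and> card B = l}"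
    then have "finite B"
      using assms finite_subset by blast
    with B have "rev (sorted_list_of_set B) \<in> ?L" "B = set (rev (sorted_list_of_set B))"
      unfolding decr_iff by auto
    then show "B \<in> set ` ?L"
      by blast
  qed
  show ?thesis
    using card_image[OF inj] n_subsets[OF assms] unfolding image by simp
qed

lemma replicate_append_eq_replicate_appendD:
  assumes "replicate k v @ D = replicate k' v @ D'" "v \<notin> set D" "v \<notin> set D'"
  shows "k = k' \<and> D = D'"
  using assms
proof (induction k arbitrary: k')
  case 0
  then show ?case
    by (cases k') auto
next
  case (Suc k)
  then show ?case
    by (cases k') auto
qed

lemma admissible_tails_eq:
  "admissible_tails v b e s = (\<lambda>(k, D). replicate k v @ D) `
    (SIGMA k:(if e then {..s} else {0}). {D. length D = s - k \<and> sorted_wrt (>) D \<and> set D \<subseteq> {..<b}})"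
proof (intro set_eqI iffI)
  fix r assume "r \<in> admissible_tails v b e s"
  then obtain k D where "length r = s" "r = replicate k v @ D" "0 < k \<longrightarrow> e"
      "sorted_wrt (>) D" "set D \<subseteq> {..<b}"
    unfolding admissible_tails_def by blast
  then show "r \<in> (\<lambda>(k, D). replicate k v @ D) `
    (SIGMA k:(if e then {..s} else {0}). {D. length D = s - k \<and> sorted_wrt (>) D \<and> set D \<subseteq> {..<b}})"
    by (intro rev_image_eqI[of "(k, D)"]) auto
next
  fix r assume "r \<in> (\<lambda>(k, D). replicate k v @ D) `
    (SIGMA k:(if e then {..s} else {0}). {D. length D = s - k \<and> sorted_wrt (>) D \<and> set D \<subseteq> {..<b}})"
  then obtain k D where "k \<in> (if e then {..s} else {0})" "length D = s - k" "sorted_wrt (>) D"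
      "set D \<subseteq> {..<b}" "r = replicate k v @ D"
    by auto
  moreover from this have "k \<le> s" "0 < k \<longrightarrow> e"
    by (auto split: if_splits)
  ultimately show "r \<in> admissible_tails v b e s"
    unfolding admissible_tails_def by auto
qed

lemma card_admissible_tails:
  assumes "b < v"
  shows "card (admissible_tails v b e s) = (b choose s) + (if e then \<Sum>l<s. b choose l else 0)"
proof -
  let ?D = "\<lambda>k. {D. length D = s - k \<and> sorted_wrt (>) D \<and> set D \<subseteq> {..<b}}"
  let ?K = "if e then {..s} else {0}"
  have finite_D: "finite (?D k)" for k
    by (rule finite_subset[OF _ finite_lists_length_eq[of "{..<b}" "s - k"]]) auto
  have "v \<notin> set D" if "set D \<subseteq> {..<b}" for D
    using that assms by auto
  then have "inj_on (\<lambda>(k, D). replicate k v @ D) (SIGMA k:?K. ?D k)"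
    by (auto simp: inj_on_def dest: replicate_append_eq_replicate_appendD)
  then have "card (admissible_tails v b e s) = (\<Sum>k\<in>?K. card (?D k))"
    unfolding admissible_tails_eq by (simp add: card_image card_SigmaI finite_D)
  also have "\<dots> = (\<Sum>k\<in>?K. b choose (s - k))"
    using card_strict_decreasing_lists[of "{..<b}"] by simp
  also have "\<dots> = (b choose s) + (if e then \<Sum>l<s. b choose l else 0)"
  proof -
    have "(\<Sum>k\<le>s. b choose (s - k)) = (\<Sum>l\<le>s. b choose l)"
      by (rule sum.reindex_bij_witness[of _ "\<lambda>l. s - l" "\<lambda>k. s - k"]) auto
    then show ?thesis
      by (simp add: lessThan_Suc_atMost[symmetric])
  qed
  finally show ?thesis .
qed

lemma admissible_tails_le:
  assumes "r \<in> admissible_tails v b e s" "b < v"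
  shows "set r \<subseteq> {..v}"
proof -
  obtain k D where "r = replicate k v @ D" "set D \<subseteq> {..<b}"
    using assms(1) unfolding admissible_tails_def by blast
  with assms(2) show ?thesis
    by auto
qed

lemma finite_admissible_tails:
  assumes "b < v"
  shows "finite (admissible_tails v b e s)"
proof (rule finite_subset)
  show "admissible_tails v b e s \<subseteq> {r. set r \<subseteq> {..v} \<and> length r = s}"
    using admissible_tails_le[OF _ assms] by (auto simp: admissible_tails_def)
qed (rule finite_lists_length_eq, simp)

lemma sum_card_admissible_tails:
  "(\<Sum>b<v. card (admissible_tails v b (E b) s)) = (v choose Suc s) + (\<Sum>b | b < v \<and> E b. \<Sum>l<s. b choose l)"
proof -
  have "(\<Sum>b<v. card (admissible_tails v b (E b) s)) =
      (\<Sum>b<v. b choose s) + (\<Sum>b<v. if E b then \<Sum>l<s. b choose l else 0)"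
    by (simp add: card_admissible_tails sum.distrib)
  also have "(\<Sum>b<v. b choose s) = v choose Suc s"
    by (cases v) (simp_all add: lessThan_Suc_atMost sum_choose_upper)
  also have "(\<Sum>b<v. if E b then \<Sum>l<s. b choose l else 0) = (\<Sum>b | b < v \<and> E b. \<Sum>l<s. b choose l)"
    by (simp add: sum.If_cases Collect_conj_eq lessThan_def Int_commute)
  finally show ?thesis .
qed

definition admissible_inv_seqs :: "nat \<Rightarrow> nat list set" where
  "admissible_inv_seqs n = {a. length a = n \<and> inv_seq a \<and> admissible a}"

lemma I_count_eq_card: "I_count n = card (admissible_inv_seqs n)"
  unfolding I_count_def admissible_inv_seqs_def by (simp only: avoids_iff_admissible)

lemma not_sorted_split:
  "\<not> sorted a \<Longrightarrow> \<exists>w b r. a = w @ b # r \<and> sorted w \<and> w \<noteq> [] \<and> b < last w"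
proof (induction a rule: rev_induct)
  case (snoc x a)
  show ?case
  proof (cases "sorted a")
    case True
    with snoc.prems have "a \<noteq> []" "x < last a"
      using sorted_le_last[OF True] by (auto simp: sorted_append not_le intro: less_le_trans)
    with True show ?thesis
      by fastforce
  next
    case False
    then obtain w b r where "a = w @ b # r" "sorted w" "w \<noteq> []" "b < last w"
      using snoc.IH by blast
    then show ?thesis
      by (intro exI[of _ w] exI[of _ b] exI[of _ "r @ [x]"]) simp
  qed
qed simp

lemma descent_split_length_le:
  assumes "u @ c # t = u' @ c' # t'" "sorted u'" "u \<noteq> []" "c < last u"
  shows "length u' \<le> length u"
proof (rule ccontr)
  assume "\<not> length u' \<le> length u"
  then have "take (Suc (length u)) u' = u @ [c]"
    using arg_cong[OF assms(1), of "take (Suc (length u))"] by simp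
  then have "sorted (u @ [c])"
    using sorted_wrt_take[OF assms(2)] by metis
  then have "last u \<le> c"
    using assms(3) by (simp add: sorted_append)
  with assms(4) show False
    by simp
qed

lemma descent_split_unique:
  assumes "w @ b # r = w' @ b' # r'" "sorted w" "sorted w'" "w \<noteq> []" "w' \<noteq> []"
    "b < last w" "b' < last w'"
  shows "w = w' \<and> b = b' \<and> r = r'"
proof -
  have "length w = length w'"
    using descent_split_length_le[OF assms(1) assms(3,4,6)]
      descent_split_length_le[OF assms(1)[symmetric] assms(2,5,7)] by simp
  then show ?thesis
    using assms(1) by simp
qed

definition descent_decompositions :: "nat \<Rightarrow> (nat \<times> nat list \<times> nat \<times> nat list) set" where
  "descent_decompositions n = (SIGMA p:{1..<n}. SIGMA w:sorted_inv_seqs p. SIGMA b:{..<last w}.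
     admissible_tails (last w) b (only_last_above w b) (n - p - 1))"

lemma not_sorted_in_descent_decompositions:
  assumes a: "a \<in> admissible_inv_seqs n" and "\<not> sorted a"
  shows "a \<in> (\<lambda>(p, w, b, r). w @ b # r) ` descent_decompositions n"
proof -
  obtain w b r where split: "a = w @ b # r" "sorted w" "w \<noteq> []" "b < last w"
    using not_sorted_split \<open>\<not> sorted a\<close> by blast
  with a have "length w < n" "inv_seq w" "length r = n - length w - 1"
    "r \<in> admissible_tails (last w) b (only_last_above w b) (length r)"
    unfolding admissible_inv_seqs_def admissible_append_iff[OF split(2-4), symmetric]
    by (auto dest: inv_seq_appendD)
  with split have "(length w, w, b, r) \<in> descent_decompositions n"
    unfolding descent_decompositions_def sorted_inv_seqs_def by (auto simp: Suc_le_eq)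
  with split(1) show ?thesis
    by (auto intro: rev_image_eqI)
qed

lemma descent_decompositions_admissible:
  assumes "(p, w, b, r) \<in> descent_decompositions n"
  shows "w @ b # r \<in> admissible_inv_seqs n"
proof -
  have p: "p \<in> {1..<n}" and w: "w \<in> sorted_inv_seqs p" and b: "b < last w"
    and r: "r \<in> admissible_tails (last w) b (only_last_above w b) (n - p - 1)"
    using assms unfolding descent_decompositions_def by auto
  have w': "length w = p" "inv_seq w" "sorted w" "w \<noteq> []"
    using w p unfolding sorted_inv_seqs_def by auto
  then have "last w < length w"
    using inv_seq_last_less by blast
  then have "set (b # r) \<subseteq> {..length w}"
    using b admissible_tails_le[OF r b] by auto
  then have "inv_seq (w @ b # r)"
    using inv_seq_append[OF w'(2)] by simp
  moreover have "length r = n - p - 1"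
    using r unfolding admissible_tails_def by simp
  then have "admissible (w @ b # r)"
    using r admissible_append_iff[OF w'(3,4) b] by simp
  moreover have "length (w @ b # r) = n"
    using \<open>length r = n - p - 1\<close> p w' by auto
  ultimately show ?thesis
    unfolding admissible_inv_seqs_def by blast
qed

lemma admissible_inv_seqs_eq:
  "admissible_inv_seqs n = sorted_inv_seqs n \<union> (\<lambda>(p, w, b, r). w @ b # r) ` descent_decompositions n"
proof (intro equalityI subsetI)
  fix a assume "a \<in> admissible_inv_seqs n"
  then show "a \<in> sorted_inv_seqs n \<union> (\<lambda>(p, w, b, r). w @ b # r) ` descent_decompositions n"
    using not_sorted_in_descent_decompositions
    unfolding admissible_inv_seqs_def sorted_inv_seqs_def by blast
next
  fix a assume "a \<in> sorted_inv_seqs n \<union> (\<lambda>(p, w, b, r). w @ b # r) ` descent_decompositions n"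
  then show "a \<in> admissible_inv_seqs n"
    using descent_decompositions_admissible sorted_admissible
    unfolding admissible_inv_seqs_def sorted_inv_seqs_def by auto
qed

lemma inj_on_descent_decompositions: "inj_on (\<lambda>(p, w, b, r). w @ b # r) (descent_decompositions n)"
proof (rule inj_onI)
  fix x x' assume x: "x \<in> descent_decompositions n" and x': "x' \<in> descent_decompositions n"
    and eq: "(\<lambda>(p, w, b, r). w @ b # r) x = (\<lambda>(p, w, b, r). w @ b # r) x'"
  obtain p w b r p' w' b' r' where xs: "x = (p, w, b, r)" "x' = (p', w', b', r')"
    by (cases x, cases x') auto
  have "w \<in> sorted_inv_seqs p" "w' \<in> sorted_inv_seqs p'" "b < last w" "b' < last w'" "0 < p" "0 < p'"
    using x x' unfolding xs descent_decompositions_def by auto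
  then show "x = x'"
    using descent_split_unique[of w b r w' b' r'] eq unfolding xs sorted_inv_seqs_def by auto
qed

lemma finite_descent_decompositions: "finite (descent_decompositions n)"
  unfolding descent_decompositions_def
  by (intro finite_SigmaI finite_sorted_inv_seqs finite_admissible_tails) auto

lemma card_descent_decompositions:
  "card (descent_decompositions n) = (\<Sum>p\<in>{1..<n}. \<Sum>w\<in>sorted_inv_seqs p.
    \<Sum>b<last w. card (admissible_tails (last w) b (only_last_above w b) (n - p - 1)))"
proof -
  have fin: "finite (SIGMA b:{..<last w}. admissible_tails (last w) b (only_last_above w b) s)" for w s
    by (intro finite_SigmaI finite_admissible_tails) auto
  have "card (descent_decompositions n) = (\<Sum>p\<in>{1..<n}. \<Sum>w\<in>sorted_inv_seqs p.
      card (SIGMA b:{..<last w}. admissible_tails (last w) b (only_last_above w b) (n - p - 1)))"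
    unfolding descent_decompositions_def
    by (simp add: card_SigmaI finite_SigmaI finite_sorted_inv_seqs fin)
  also have "\<dots> = (\<Sum>p\<in>{1..<n}. \<Sum>w\<in>sorted_inv_seqs p.
      \<Sum>b<last w. card (admissible_tails (last w) b (only_last_above w b) (n - p - 1)))"
    by (simp add: card_SigmaI finite_admissible_tails)
  finally show ?thesis .
qed

lemma sorted_inv_seqs_disjoint_descent_decompositions:
  "sorted_inv_seqs n \<inter> (\<lambda>(p, w, b, r). w @ b # r) ` descent_decompositions n = {}"
proof (rule equals0I)
  fix a assume "a \<in> sorted_inv_seqs n \<inter> (\<lambda>(p, w, b, r). w @ b # r) ` descent_decompositions n"
  then obtain p w b r where a: "a \<in> sorted_inv_seqs n" "a = w @ b # r"
    and decomp: "(p, w, b, r) \<in> descent_decompositions n"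
    by auto
  from decomp have "w \<noteq> []" "b < last w"
    unfolding descent_decompositions_def sorted_inv_seqs_def by auto
  moreover have "sorted (w @ b # r)"
    using a unfolding sorted_inv_seqs_def by simp
  ultimately have "last w \<le> b" "b < last w"
    by (simp_all add: sorted_append)
  then show False
    by simp
qed

lemma card_admissible_inv_seqs:
  assumes "0 < n"
  shows "card (admissible_inv_seqs n) = (\<Sum>p=1..n. \<Sum>w\<in>sorted_inv_seqs p.
    (last w choose (n - p)) + (\<Sum>b | b < last w \<and> only_last_above w b. \<Sum>l<n - p - 1. b choose l))"
    (is "_ = (\<Sum>p=1..n. \<Sum>w\<in>sorted_inv_seqs p. ?f p w)")
proof -
  have "card (admissible_inv_seqs n) = card (sorted_inv_seqs n) + card (descent_decompositions n)"
    unfolding admissible_inv_seqs_eq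
    by (simp add: card_Un_disjoint finite_sorted_inv_seqs finite_descent_decompositions
        sorted_inv_seqs_disjoint_descent_decompositions card_image[OF inj_on_descent_decompositions])
  also have "card (descent_decompositions n) = (\<Sum>p\<in>{1..<n}. \<Sum>w\<in>sorted_inv_seqs p. ?f p w)"
    unfolding card_descent_decompositions
    by (intro sum.cong refl) (simp add: sum_card_admissible_tails Suc_diff_Suc)
  also have "card (sorted_inv_seqs n) = (\<Sum>w\<in>sorted_inv_seqs n. ?f n w)"
    by simp
  finally show ?thesis
    using assms by (cases n) (simp_all add: sum.cl_ivl_Suc atLeastLessThanSuc_atLeastAtMost add.commute)
qed

section \<open>Statistics of the last entry\<close>

lemma geometric_sum_mult:
  fixes u :: "'a::comm_ring_1"
  assumes "v \<le> Suc p"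
  shows "(u - 1) * (\<Sum>x=v..p. u ^ x) = u ^ Suc p - u ^ v"
proof (cases "v = Suc p")
  case False
  then show ?thesis
    using sum_gp_multiplied[of v p u] assms by (simp add: algebra_simps)
qed simp

lemma weighted_geometric_sum_mult:
  fixes u :: "'a::comm_ring_1"
  assumes "v \<le> p"
  shows "(u - 1)^2 * (\<Sum>x=v..p. of_nat (Suc p - x) * u ^ x) =
    u ^ Suc (Suc p) - u ^ v - (u - 1) * (of_nat (p - v) + 2) * u ^ v"
  using assms
proof (induction p rule: dec_induct)
  case base
  then show ?case by (simp add: algebra_simps power2_eq_square)
next
  case (step p)
  define S where "S = (\<Sum>x=v..p. of_nat (Suc p - x) * u ^ x)"
  define T where "T = (\<Sum>x=v..Suc p. u ^ x)"
  have "(\<Sum>x=v..Suc p. of_nat (Suc (Suc p) - x) * u ^ x) = (\<Sum>x=v..Suc p. of_nat (Suc p - x) * u ^ x + u ^ x)"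
    by (rule sum.cong) (auto simp: Suc_diff_le algebra_simps)
  also have "\<dots> = S + T"
    unfolding sum.distrib S_def T_def using step.hyps by (simp add: sum.cl_ivl_Suc)
  finally have split: "(\<Sum>x=v..Suc p. of_nat (Suc (Suc p) - x) * u ^ x) = S + T" .
  have "(u - 1)^2 * (S + T) = (u - 1)^2 * S + (u - 1) * ((u - 1) * T)"
    by (simp add: algebra_simps power2_eq_square)
  also have "\<dots> = u ^ Suc (Suc (Suc p)) - u ^ v - (u - 1) * (of_nat (Suc p - v) + 2) * u ^ v"
    unfolding S_def T_def step.IH geometric_sum_mult[of v "Suc p" u, OF le_SucI[OF le_SucI[OF step.hyps(1)]]]
    using step.hyps by (simp add: Suc_diff_le algebra_simps power2_eq_square)
  finally show ?case
    unfolding split .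
qed

lemma double_geometric_sum_mult:
  fixes u :: "'a::comm_ring_1"
  assumes "v \<le> Suc p"
  shows "(u - 1)^2 * (\<Sum>x=v..p. \<Sum>b=v..<x. u ^ b) = u ^ Suc p - u ^ v - (u - 1) * of_nat (Suc p - v) * u ^ v"
proof -
  have "(u - 1)^2 * (\<Sum>b=v..<x. u ^ b) = (u - 1) * (u ^ x - u ^ v)" if "x \<in> {v..p}" for x
    using geometric_sum_mult[of v "x - 1" u] that
    by (cases x) (auto simp: atLeastLessThanSuc_atLeastAtMost power2_eq_square mult.assoc)
  then have "(u - 1)^2 * (\<Sum>x=v..p. \<Sum>b=v..<x. u ^ b) = (\<Sum>x=v..p. (u - 1) * (u ^ x - u ^ v))"
    unfolding sum_distrib_left by (rule sum.cong[OF refl])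
  also have "\<dots> = (u - 1) * (\<Sum>x=v..p. u ^ x - u ^ v)"
    by (simp add: sum_distrib_left)
  also have "\<dots> = u ^ Suc p - u ^ v - (u - 1) * of_nat (Suc p - v) * u ^ v"
    using geometric_sum_mult[OF assms, of u] assms by (simp add: sum_subtractf algebra_simps)
  finally show ?thesis .
qed

(* At u = 1 + X the coefficients of these polynomials are the binomial sums in
   card_admissible_inv_seqs. *)
definition last_gf :: "'a::comm_ring_1 \<Rightarrow> nat \<Rightarrow> 'a" where
  "last_gf u p = (\<Sum>w\<in>sorted_inv_seqs p. u ^ last w)"

definition slack_gf :: "'a::comm_ring_1 \<Rightarrow> nat \<Rightarrow> 'a" where
  "slack_gf u p = (\<Sum>w\<in>sorted_inv_seqs p. of_nat (p - last w) * u ^ last w)"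

definition descent_gf :: "'a::comm_ring_1 \<Rightarrow> nat \<Rightarrow> 'a" where
  "descent_gf u p = (\<Sum>w\<in>sorted_inv_seqs p. \<Sum>b | b < last w \<and> only_last_above w b. u ^ b)"

lemma gf_Suc_0: "last_gf u (Suc 0) = 1" "slack_gf u (Suc 0) = 1" "descent_gf u (Suc 0) = 0"
  by (simp_all add: last_gf_def slack_gf_def descent_gf_def sorted_inv_seqs_Suc_0)

lemma last_gf_Suc:
  fixes u :: "'a::comm_ring_1"
  assumes "0 < p"
  shows "(u - 1) * last_gf u (Suc p) = of_nat (card (sorted_inv_seqs p)) * u ^ Suc p - last_gf u p"
proof -
  have "(u - 1) * last_gf u (Suc p) = (\<Sum>w\<in>sorted_inv_seqs p. (u - 1) * (\<Sum>x=last w..p. u ^ x))"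
    unfolding last_gf_def sum_sorted_inv_seqs_Suc[OF assms] by (simp add: sum_distrib_left)
  also have "\<dots> = (\<Sum>w\<in>sorted_inv_seqs p. u ^ Suc p - u ^ last w)"
    using sorted_inv_seqs_last_less[OF _ assms] by (intro sum.cong refl geometric_sum_mult) fastforce
  finally show ?thesis
    by (simp add: last_gf_def sum_subtractf)
qed

lemma slack_gf_Suc:
  fixes u :: "'a::comm_ring_1"
  assumes "0 < p"
  shows "(u - 1)^2 * slack_gf u (Suc p) =
    of_nat (card (sorted_inv_seqs p)) * u ^ Suc (Suc p) - last_gf u p - (u - 1) * (slack_gf u p + 2 * last_gf u p)"
proof -
  have "(u - 1)^2 * slack_gf u (Suc p) =
      (\<Sum>w\<in>sorted_inv_seqs p. (u - 1)^2 * (\<Sum>x=last w..p. of_nat (Suc p - x) * u ^ x))"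
    unfolding slack_gf_def sum_sorted_inv_seqs_Suc[OF assms] by (simp add: sum_distrib_left)
  also have "\<dots> = (\<Sum>w\<in>sorted_inv_seqs p.
      u ^ Suc (Suc p) - u ^ last w - (u - 1) * (of_nat (p - last w) * u ^ last w + 2 * u ^ last w))"
  proof (rule sum.cong[OF refl])
    fix w assume "w \<in> sorted_inv_seqs p"
    then have "last w \<le> p"
      using sorted_inv_seqs_last_less[OF _ assms] by fastforce
    then show "(u - 1)^2 * (\<Sum>x=last w..p. of_nat (Suc p - x) * u ^ x) =
      u ^ Suc (Suc p) - u ^ last w - (u - 1) * (of_nat (p - last w) * u ^ last w + 2 * u ^ last w)"
      unfolding weighted_geometric_sum_mult[OF \<open>last w \<le> p\<close>] by (simp add: algebra_simps)
  qed
  also have "\<dots> = of_nat (card (sorted_inv_seqs p)) * u ^ Suc (Suc p) - last_gf u p -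
      (u - 1) * (slack_gf u p + 2 * last_gf u p)"
    by (simp add: last_gf_def slack_gf_def sum_subtractf sum.distrib sum_distrib_left distrib_left)
  finally show ?thesis .
qed

lemma descent_values_snoc:
  assumes "sorted w" "w \<noteq> []" "last w \<le> x"
  shows "{b. b < x \<and> only_last_above (w @ [x]) b} =
    (if x = last w then {b. b < last w \<and> only_last_above w b} else {last w..<x})"
proof (cases "x = last w")
  case True
  then show ?thesis
    by (auto simp: only_last_above_def)
next
  case False
  have iff: "only_last_above (w @ [x]) b \<longleftrightarrow> last w \<le> b" for b
  proof
    assume "only_last_above (w @ [x]) b"
    then have "b < last w \<longrightarrow> last w = x"
      using assms(2) unfolding only_last_above_def by simp
    with False show "last w \<le> b"
      by auto
  next
    assume "last w \<le> b"
    then show "only_last_above (w @ [x]) b"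
      using sorted_le_last[OF assms(1)] unfolding only_last_above_def by fastforce
  qed
  have "{b. b < x \<and> only_last_above (w @ [x]) b} = {last w..<x}"
    unfolding iff by auto
  with False show ?thesis
    by simp
qed

lemma sum_descent_values_snoc:
  assumes "sorted w" "w \<noteq> []" "last w \<le> p"
  shows "(\<Sum>x=last w..p. \<Sum>b | b < x \<and> only_last_above (w @ [x]) b. u ^ b) =
    (\<Sum>b | b < last w \<and> only_last_above w b. u ^ b) + (\<Sum>x=last w..p. \<Sum>b=last w..<x. u ^ b)"
proof -
  have "(\<Sum>x=last w..p. \<Sum>b | b < x \<and> only_last_above (w @ [x]) b. u ^ b) =
      (\<Sum>b | b < last w \<and> only_last_above w b. u ^ b) +
      (\<Sum>x=Suc (last w)..p. \<Sum>b | b < x \<and> only_last_above (w @ [x]) b. u ^ b)"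
    using assms by (simp add: sum.atLeast_Suc_atMost descent_values_snoc)
  also have "(\<Sum>x=Suc (last w)..p. \<Sum>b | b < x \<and> only_last_above (w @ [x]) b. u ^ b) =
      (\<Sum>x=last w..p. \<Sum>b=last w..<x. u ^ b)"
    using assms by (simp add: sum.atLeast_Suc_atMost descent_values_snoc)
  finally show ?thesis .
qed

lemma descent_gf_Suc:
  fixes u :: "'a::comm_ring_1"
  assumes "0 < p"
  shows "(u - 1)^2 * (descent_gf u (Suc p) - descent_gf u p) =
    of_nat (card (sorted_inv_seqs p)) * u ^ Suc p - last_gf u p - (u - 1) * (slack_gf u p + last_gf u p)"
proof -
  have "(\<Sum>x=last w..p. \<Sum>b | b < x \<and> only_last_above (w @ [x]) b. u ^ b) =
      (\<Sum>b | b < last w \<and> only_last_above w b. u ^ b) + (\<Sum>x=last w..p. \<Sum>b=last w..<x. u ^ b)"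
    if w: "w \<in> sorted_inv_seqs p" for w
    using w sorted_inv_seqs_last_less[OF w assms] assms unfolding sorted_inv_seqs_def
    by (intro sum_descent_values_snoc) auto
  then have "descent_gf u (Suc p) - descent_gf u p =
      (\<Sum>w\<in>sorted_inv_seqs p. \<Sum>x=last w..p. \<Sum>b=last w..<x. u ^ b)"
    unfolding descent_gf_def sum_sorted_inv_seqs_Suc[OF assms] by (simp add: sum.distrib)
  then have "(u - 1)^2 * (descent_gf u (Suc p) - descent_gf u p) =
      (\<Sum>w\<in>sorted_inv_seqs p. (u - 1)^2 * (\<Sum>x=last w..p. \<Sum>b=last w..<x. u ^ b))"
    by (simp add: sum_distrib_left)
  also have "\<dots> = (\<Sum>w\<in>sorted_inv_seqs p.
      u ^ Suc p - u ^ last w - (u - 1) * (of_nat (p - last w) * u ^ last w + u ^ last w))"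
  proof (rule sum.cong[OF refl])
    fix w assume "w \<in> sorted_inv_seqs p"
    then have "last w \<le> p"
      using sorted_inv_seqs_last_less[OF _ assms] by fastforce
    then show "(u - 1)^2 * (\<Sum>x=last w..p. \<Sum>b=last w..<x. u ^ b) =
      u ^ Suc p - u ^ last w - (u - 1) * (of_nat (p - last w) * u ^ last w + u ^ last w)"
      unfolding double_geometric_sum_mult[OF le_SucI[OF \<open>last w \<le> p\<close>]]
      by (simp add: Suc_diff_le algebra_simps)
  qed
  also have "\<dots> = of_nat (card (sorted_inv_seqs p)) * u ^ Suc p - last_gf u p -
      (u - 1) * (slack_gf u p + last_gf u p)"
    by (simp add: last_gf_def slack_gf_def sum_subtractf sum.distrib sum_distrib_left distrib_left)
  finally show ?thesis .
qed

section \<open>Generating functions\<close>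

(* The formal sum of X^p * f p over all p \<ge> 1; each coefficient is a finite sum. *)
definition fps_series :: "(nat \<Rightarrow> 'a::comm_ring_1 fps) \<Rightarrow> 'a fps" where
  "fps_series f = Abs_fps (\<lambda>n. \<Sum>p=1..n. f p $ (n - p))"

lemma fps_series_nth: "fps_series f $ n = (\<Sum>p=1..n. f p $ (n - p))"
  by (simp add: fps_series_def)

lemma fps_series_cong: "(\<And>p. 0 < p \<Longrightarrow> f p = g p) \<Longrightarrow> fps_series f = fps_series g"
  unfolding fps_series_def by (intro arg_cong[where f = Abs_fps] ext sum.cong) auto

lemma fps_series_add: "fps_series (\<lambda>p. f p + g p) = fps_series f + fps_series g"
  by (rule fps_ext) (simp add: fps_series_nth sum.distrib)

lemma fps_series_diff: "fps_series (\<lambda>p. f p - g p) = fps_series f - fps_series g"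
  by (rule fps_ext) (simp add: fps_series_nth sum_subtractf)

lemma fps_series_partial_sum_nth:
  assumes "n \<le> M"
  shows "(\<Sum>p=1..M. fps_X ^ p * f p) $ n = fps_series f $ n"
proof -
  have "(\<Sum>p=1..M. fps_X ^ p * f p) $ n = (\<Sum>p=1..n. (fps_X ^ p * f p) $ n)"
    unfolding fps_sum_nth
    by (rule sum.mono_neutral_right) (use assms in \<open>auto simp: fps_X_power_mult_nth\<close>)
  also have "\<dots> = (\<Sum>p=1..n. f p $ (n - p))"
    by (rule sum.cong) (auto simp: fps_X_power_mult_nth)
  finally show ?thesis
    by (simp add: fps_series_nth)
qed

lemma fps_series_mult_left: "fps_series (\<lambda>p. c * f p) = c * fps_series f"
proof (rule fps_ext)
  fix n
  \<comment> \<open>Coefficient n of a product only sees coefficients up to n, where the series is a finite sum.\<close>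
  have "fps_cutoff (Suc n) (fps_series f) = fps_cutoff (Suc n) (\<Sum>p=1..n. fps_X ^ p * f p)"
    unfolding fps_cutoff_eq_fps_cutoff_iff using fps_series_partial_sum_nth less_Suc_eq_le by metis
  then have "(c * fps_series f) $ n = (c * (\<Sum>p=1..n. fps_X ^ p * f p)) $ n"
    by (metis fps_cutoff_right_mult_nth lessI)
  also have "\<dots> = (\<Sum>p=1..n. fps_X ^ p * (c * f p)) $ n"
    by (simp add: sum_distrib_left mult.left_commute)
  also have "\<dots> = fps_series (\<lambda>p. c * f p) $ n"
    by (rule fps_series_partial_sum_nth) simp
  finally show "fps_series (\<lambda>p. c * f p) $ n = (c * fps_series f) $ n"
    by simp
qed

lemma fps_series_shift: "fps_series (\<lambda>p. fps_X * f (Suc p)) = fps_series f - fps_X * f 1"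
proof (rule fps_ext)
  fix n
  show "fps_series (\<lambda>p. fps_X * f (Suc p)) $ n = (fps_series f - fps_X * f 1) $ n"
  proof (cases n)
    case (Suc m)
    have "fps_series (\<lambda>p. fps_X * f (Suc p)) $ n = (\<Sum>p=1..m. f (Suc p) $ (m - p))"
      using Suc by (simp add: fps_series_nth sum.cl_ivl_Suc Suc_diff_le)
    also have "\<dots> = (\<Sum>p=Suc 1..Suc m. f p $ (Suc m - p))"
      by (simp only: sum.shift_bounds_cl_Suc_ivl diff_Suc_Suc)
    also have "\<dots> = fps_series f $ n - f 1 $ m"
      using Suc sum.atLeast_Suc_atMost[of 1 "Suc m" "\<lambda>p. f p $ (Suc m - p)"] by (simp add: fps_series_nth)
    finally show ?thesis
      using Suc by simp
  qed (simp add: fps_series_nth)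
qed

lemma fps_series_compose:
  "fps_series (\<lambda>p. fps_const (g $ p) * s ^ p) = fps_compose g (fps_X * s) - fps_const (g $ 0)"
proof (rule fps_ext)
  fix n
  have "fps_compose g (fps_X * s) $ n = (\<Sum>p=0..n. g $ p * (s ^ p) $ (n - p))"
    by (simp add: fps_compose_nth power_mult_distrib fps_X_power_mult_nth)
  also have "\<dots> = g $ 0 * (if n = 0 then 1 else 0) + (\<Sum>p=1..n. g $ p * (s ^ p) $ (n - p))"
    by (simp add: sum.atLeast_Suc_atMost)
  finally show "fps_series (\<lambda>p. fps_const (g $ p) * s ^ p) $ n = (fps_compose g (fps_X * s) - fps_const (g $ 0)) $ n"
    by (simp add: fps_series_nth)
qed

definition sorted_inv_fps :: "'a::comm_ring_1 fps" where
  "sorted_inv_fps = Abs_fps (\<lambda>p. of_nat (card (sorted_inv_seqs p)))"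

lemma fps_series_sorted_inv_fps:
  "fps_series (\<lambda>p. of_nat (card (sorted_inv_seqs p)) * s ^ p) = fps_compose sorted_inv_fps (fps_X * s) - 1"
  using fps_series_compose[of sorted_inv_fps s] by (simp add: sorted_inv_fps_def fps_of_nat sorted_inv_seqs_0)

lemma fps_series_last_gf_one_plus_X:
  "fps_series (last_gf (1 + fps_X)) - fps_X =
    (1 + fps_X) * (fps_compose sorted_inv_fps (fps_X * (1 + fps_X)) - 1)
      - fps_series (last_gf (1 + fps_X :: 'a::comm_ring_1 fps))"
proof -
  have "fps_series (\<lambda>p. fps_X * last_gf (1 + fps_X) (Suc p)) = fps_series (\<lambda>p.
      (1 + fps_X) * (of_nat (card (sorted_inv_seqs p)) * (1 + fps_X) ^ p) - last_gf (1 + fps_X :: 'a fps) p)"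
    by (intro fps_series_cong) (simp add: last_gf_Suc[of _ "1 + fps_X", simplified] mult_ac)
  then have "fps_series (last_gf (1 + fps_X)) - fps_X * last_gf (1 + fps_X) 1 =
      (1 + fps_X) * (fps_compose sorted_inv_fps (fps_X * (1 + fps_X)) - 1) - fps_series (last_gf (1 + fps_X :: 'a fps))"
    by (simp only: fps_series_shift fps_series_diff fps_series_mult_left fps_series_sorted_inv_fps)
  then show ?thesis
    by (simp only: gf_Suc_0[folded One_nat_def] mult_1_right)
qed

lemma fps_series_last_gf_one_minus_X:
  "(1 - fps_X) * (fps_compose sorted_inv_fps (fps_X * (1 - fps_X)) - 1) = (fps_X :: 'a::comm_ring_1 fps)"
proof -
  have "fps_series (\<lambda>p. fps_X * last_gf (1 - fps_X) (Suc p)) = fps_series (\<lambda>p.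
      last_gf (1 - fps_X :: 'a fps) p - (1 - fps_X) * (of_nat (card (sorted_inv_seqs p)) * (1 - fps_X) ^ p))"
  proof (intro fps_series_cong)
    fix p :: nat assume "0 < p"
    from last_gf_Suc[OF this, of "1 - fps_X :: 'a fps"]
    show "fps_X * last_gf (1 - fps_X) (Suc p) =
        last_gf (1 - fps_X :: 'a fps) p - (1 - fps_X) * (of_nat (card (sorted_inv_seqs p)) * (1 - fps_X) ^ p)"
      by (simp add: algebra_simps)
  qed
  then have "fps_series (last_gf (1 - fps_X)) - fps_X * last_gf (1 - fps_X) 1 =
      fps_series (last_gf (1 - fps_X :: 'a fps)) - (1 - fps_X) * (fps_compose sorted_inv_fps (fps_X * (1 - fps_X)) - 1)"
    by (simp only: fps_series_shift fps_series_diff fps_series_mult_left fps_series_sorted_inv_fps)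
  then show ?thesis
    by (simp add: gf_Suc_0)
qed

lemma fps_series_slack_gf_one_plus_X:
  "fps_X * (fps_series (slack_gf (1 + fps_X)) - fps_X) =
    (1 + fps_X)^2 * (fps_compose sorted_inv_fps (fps_X * (1 + fps_X)) - 1) - fps_series (last_gf (1 + fps_X))
      - fps_X * (fps_series (slack_gf (1 + fps_X)) + 2 * fps_series (last_gf (1 + fps_X :: 'a::comm_ring_1 fps)))"
proof -
  have "fps_series (\<lambda>p. fps_X * (fps_X * slack_gf (1 + fps_X) (Suc p))) = fps_series (\<lambda>p.
      (1 + fps_X)^2 * (of_nat (card (sorted_inv_seqs p)) * (1 + fps_X) ^ p) - last_gf (1 + fps_X) p
        - fps_X * (slack_gf (1 + fps_X) p + 2 * last_gf (1 + fps_X :: 'a fps) p))"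
  proof (intro fps_series_cong)
    fix p :: nat assume "0 < p"
    from slack_gf_Suc[OF this, of "1 + fps_X :: 'a fps"]
    show "fps_X * (fps_X * slack_gf (1 + fps_X) (Suc p)) =
        (1 + fps_X)^2 * (of_nat (card (sorted_inv_seqs p)) * (1 + fps_X) ^ p) - last_gf (1 + fps_X) p
          - fps_X * (slack_gf (1 + fps_X) p + 2 * last_gf (1 + fps_X :: 'a fps) p)"
      by (simp add: power2_eq_square mult_ac)
  qed
  then show ?thesis
    by (simp only: fps_series_shift fps_series_diff fps_series_add fps_series_mult_left
        fps_series_sorted_inv_fps gf_Suc_0[folded One_nat_def] mult_1_right)
qed

lemma fps_series_descent_gf_one_plus_X:
  "fps_X * fps_series (descent_gf (1 + fps_X)) - fps_X^2 * fps_series (descent_gf (1 + fps_X)) =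
    (1 + fps_X) * (fps_compose sorted_inv_fps (fps_X * (1 + fps_X)) - 1) - fps_series (last_gf (1 + fps_X))
      - fps_X * (fps_series (slack_gf (1 + fps_X)) + fps_series (last_gf (1 + fps_X :: 'a::comm_ring_1 fps)))"
proof -
  have "fps_series (\<lambda>p. fps_X * (fps_X * descent_gf (1 + fps_X) (Suc p)) - fps_X^2 * descent_gf (1 + fps_X) p) =
      fps_series (\<lambda>p. (1 + fps_X) * (of_nat (card (sorted_inv_seqs p)) * (1 + fps_X) ^ p) - last_gf (1 + fps_X) p
        - fps_X * (slack_gf (1 + fps_X) p + last_gf (1 + fps_X :: 'a fps) p))"
  proof (intro fps_series_cong)
    fix p :: nat assume "0 < p"
    from descent_gf_Suc[OF this, of "1 + fps_X :: 'a fps"]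
    show "fps_X * (fps_X * descent_gf (1 + fps_X) (Suc p)) - fps_X^2 * descent_gf (1 + fps_X) p =
        (1 + fps_X) * (of_nat (card (sorted_inv_seqs p)) * (1 + fps_X) ^ p) - last_gf (1 + fps_X) p
          - fps_X * (slack_gf (1 + fps_X) p + last_gf (1 + fps_X :: 'a fps) p)"
      by (simp add: power2_eq_square mult_ac right_diff_distrib)
  qed
  then show ?thesis
    by (simp only: fps_series_shift fps_series_diff fps_series_add fps_series_mult_left
        fps_series_sorted_inv_fps gf_Suc_0[folded One_nat_def] mult_zero_right diff_zero)
qed

(* Composition with X (1 - X) is injective, and C (X (1 - X)) = 1 / (1 - X) satisfies the
   Catalan equation at X (1 - X). *)
lemma sorted_inv_fps_catalan: "sorted_inv_fps = 1 + fps_X * (sorted_inv_fps :: 'a::idom fps)^2"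
proof -
  let ?w = "fps_X * (1 - fps_X) :: 'a fps"
  let ?c = "fps_compose sorted_inv_fps ?w"
  have w0: "?w $ 0 = 0"
    by simp
  have "(1 - fps_X) * ?c = 1"
    using fps_series_last_gf_one_minus_X[where 'a = 'a] by (simp add: algebra_simps)
  then have "(1 - fps_X)^2 * (?c - 1 - ?w * ?c^2) = 0"
    by algebra
  moreover have "(1 - fps_X)^2 \<noteq> (0 :: 'a fps)"
    by (metis power_eq_0_iff right_minus_eq fps_X_neq_one)
  ultimately have "?c - 1 - ?w * ?c^2 = 0"
    by simp
  moreover have "fps_compose (sorted_inv_fps - 1 - fps_X * sorted_inv_fps^2) ?w = ?c - 1 - ?w * ?c^2"
    by (simp add: fps_compose_sub_distrib fps_compose_mult_distrib[OF w0] fps_compose_power[OF w0])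
  moreover have "?w \<noteq> 0"
    by (metis fps_X_neq_zero mult_eq_0_iff right_minus_eq fps_X_neq_one)
  ultimately have "sorted_inv_fps - 1 - fps_X * sorted_inv_fps^2 = (0 :: 'a fps)"
    using fps_compose_eq_0_iff[OF w0] by auto
  then show ?thesis
    by (simp add: algebra_simps)
qed

lemma sorted_inv_fps_compose:
  fixes s :: "'a::idom fps"
  shows "fps_compose sorted_inv_fps (fps_X * s) - 1 = fps_X * s * (fps_compose sorted_inv_fps (fps_X * s))^2"
proof -
  have t0: "(fps_X * s) $ 0 = 0"
    by simp
  have "fps_compose sorted_inv_fps (fps_X * s) = fps_compose (1 + fps_X * sorted_inv_fps^2) (fps_X * s)"
    by (rule arg_cong[OF sorted_inv_fps_catalan])
  also have "\<dots> = 1 + fps_X * s * (fps_compose sorted_inv_fps (fps_X * s))^2"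
    by (simp add: fps_compose_add_distrib fps_compose_mult_distrib[OF t0] fps_compose_power[OF t0, symmetric])
  finally show ?thesis
    by (metis add_diff_cancel_left')
qed

lemma one_plus_X_power_nth: "((1 + fps_X :: 'a::field_char_0 fps) ^ m) $ l = of_nat (m choose l)"
  by (simp add: fps_binomial_of_nat[symmetric] binomial_gbinomial)

lemma last_gf_one_plus_X_nth:
  "last_gf (1 + fps_X) p $ l = (of_nat (\<Sum>w\<in>sorted_inv_seqs p. last w choose l) :: 'a::field_char_0)"
  by (simp add: last_gf_def fps_sum_nth one_plus_X_power_nth)

lemma descent_gf_one_plus_X_nth:
  "descent_gf (1 + fps_X) p $ l =
    (of_nat (\<Sum>w\<in>sorted_inv_seqs p. \<Sum>b | b < last w \<and> only_last_above w b. b choose l) :: 'a::field_char_0)"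
  by (simp add: descent_gf_def fps_sum_nth one_plus_X_power_nth)

lemma fps_X_power2_mult_ones_nth: "(fps_X^2 * Abs_fps (\<lambda>_. 1) * f) $ m = (\<Sum>l<m - 1. f $ l)"
proof (cases "m < 2")
  case True
  then show ?thesis
    by (auto simp: power2_eq_square mult.assoc less_2_cases_iff)
next
  case False
  then obtain j where m: "m = Suc (Suc j)"
    by (metis add_2_eq_Suc le_add_diff_inverse not_less)
  then have "(fps_X^2 * Abs_fps (\<lambda>_. 1) * f) $ m = (Abs_fps (\<lambda>_. 1) * f) $ j"
    by (simp add: power2_eq_square mult.assoc)
  also have "\<dots> = (\<Sum>i=0..j. f $ (j - i))"
    by (simp add: fps_mult_nth)
  also have "\<dots> = (\<Sum>l<m - 1. f $ l)"
    using m by (subst sum.atLeastAtMost_rev) (simp add: atLeast0AtMost lessThan_Suc_atMost)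
  finally show ?thesis .
qed

lemma sum_descent_gf_one_plus_X_nth:
  "(\<Sum>l<k. descent_gf (1 + fps_X) p $ l) =
    (of_nat (\<Sum>w\<in>sorted_inv_seqs p. \<Sum>b | b < last w \<and> only_last_above w b. \<Sum>l<k. b choose l) :: 'a::field_char_0)"
proof -
  have "(\<Sum>l<k. descent_gf (1 + fps_X) p $ l) =
      (\<Sum>l<k. \<Sum>w\<in>sorted_inv_seqs p. \<Sum>b | b < last w \<and> only_last_above w b. (of_nat (b choose l) :: 'a))"
    by (simp add: descent_gf_one_plus_X_nth)
  also have "\<dots> = (\<Sum>w\<in>sorted_inv_seqs p. \<Sum>l<k. \<Sum>b | b < last w \<and> only_last_above w b. of_nat (b choose l))"
    by (rule sum.swap)
  also have "\<dots> = (\<Sum>w\<in>sorted_inv_seqs p. \<Sum>b | b < last w \<and> only_last_above w b. \<Sum>l<k. of_nat (b choose l))"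
    by (rule sum.cong[OF refl], rule sum.swap)
  finally show ?thesis
    by simp
qed

lemma I_count_fps:
  "Abs_fps (\<lambda>n. of_nat (I_count n)) =
    1 + fps_series (last_gf (1 + fps_X)) +
      fps_X^2 * Abs_fps (\<lambda>_. 1) * fps_series (descent_gf (1 + fps_X :: 'a::field_char_0 fps))"
proof (rule fps_ext)
  fix n
  show "Abs_fps (\<lambda>n. of_nat (I_count n)) $ n = (1 + fps_series (last_gf (1 + fps_X)) +
      fps_X^2 * Abs_fps (\<lambda>_. 1) * fps_series (descent_gf (1 + fps_X :: 'a fps))) $ n"
  proof (cases "n = 0")
    case True
    have "admissible_inv_seqs 0 = {[]}"
      unfolding admissible_inv_seqs_def inv_seq_def admissible_def by auto
    with True show ?thesis
      by (simp add: I_count_eq_card fps_series_nth fps_X_power2_mult_ones_nth)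
  next
    case False
    have "(1 + fps_series (last_gf (1 + fps_X)) +
        fps_X^2 * Abs_fps (\<lambda>_. 1) * fps_series (descent_gf (1 + fps_X :: 'a fps))) $ n =
        fps_series (\<lambda>p. last_gf (1 + fps_X) p + fps_X^2 * Abs_fps (\<lambda>_. 1) * descent_gf (1 + fps_X) p) $ n"
      using False by (simp add: fps_series_add fps_series_mult_left mult.assoc)
    also have "\<dots> = (\<Sum>p=1..n. last_gf (1 + fps_X) p $ (n - p) + (\<Sum>l<n - p - 1. descent_gf (1 + fps_X) p $ l))"
      by (simp add: fps_series_nth fps_X_power2_mult_ones_nth)
    also have "\<dots> = of_nat (card (admissible_inv_seqs n))"
      using False by (simp add: card_admissible_inv_seqs last_gf_one_plus_X_nth
          sum_descent_gf_one_plus_X_nth sum.distrib)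
    finally show ?thesis
      by (simp add: I_count_eq_card)
  qed
qed

lemma one_minus_X_mult_ones: "(1 - fps_X) * Abs_fps (\<lambda>_. 1 :: 'a::field) = 1"
  unfolding fps_inverse_gp'[symmetric] by (rule inverse_mult_eq_1) simp

(* With y = X (1 + X): 1 - 2X - 4XU = 1 - 2yc and yc^2 = c - 1. *)
lemma radical_witness_square:
  fixes U c :: "real fps"
  assumes "U - fps_X = (1 + fps_X) * (c - 1) - U" and "c - 1 = fps_X * (1 + fps_X) * c^2"
  shows "(1 - 2 * fps_X - 4 * fps_X * U)^2 = 1 - 4 * fps_X - 4 * fps_X^2"
  using assms by algebra

lemma cleared_denominator_eq:
  fixes U Y E I G c :: "real fps"
  assumes "U - fps_X = (1 + fps_X) * (c - 1) - U"
    and "fps_X * (Y - fps_X) = (1 + fps_X)^2 * (c - 1) - U - fps_X * (Y + 2 * U)"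
    and "fps_X * E - fps_X^2 * E = (1 + fps_X) * (c - 1) - U - fps_X * (Y + U)"
    and "I = 1 + U + fps_X^2 * G * E" and "(1 - fps_X) * G = 1"
  shows "I * (8 * fps_X * (1 - fps_X)^2) =
    2 + fps_X - 10 * fps_X^2 + 4 * fps_X^3 - (2 - 3 * fps_X) * (1 - 2 * fps_X - 4 * fps_X * U)"
proof -
  have "(1 - fps_X) * (I - 1 - U) = fps_X^2 * E * ((1 - fps_X) * G)"
    unfolding assms(4) by (simp add: algebra_simps)
  then have "(1 - fps_X) * (I - 1 - U) = fps_X^2 * E"
    unfolding assms(5) by simp
  with assms(1-3) show ?thesis
    by algebra
qed

theorem mainTheorem3:
  shows "Abs_fps (\<lambda>n. real (I_count n)) =
    (2 + fps_X - 10 * fps_X ^ 2 + 4 * fps_X ^ 3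
      - (2 - 3 * fps_X) * fps_radical (\<lambda>_ _. 1) 2 (1 - 4 * fps_X - 4 * fps_X ^ 2))
    / (8 * fps_X * (1 - fps_X) ^ 2)"
proof -
  let ?R = "1 - 2 * fps_X - 4 * fps_X * fps_series (last_gf (1 + fps_X)) :: real fps"
  have "?R ^ 2 = 1 - 4 * fps_X - 4 * fps_X ^ 2"
    by (rule radical_witness_square[OF fps_series_last_gf_one_plus_X sorted_inv_fps_compose])
  then have rad: "fps_radical (\<lambda>_ _. 1) 2 (1 - 4 * fps_X - 4 * fps_X ^ 2) = ?R"
    using radical_unique[of "\<lambda>_ _. 1" 1 "1 - 4 * fps_X - 4 * fps_X ^ 2" ?R]
    by (simp add: numeral_2_eq_2)
  have den: "8 * fps_X * (1 - fps_X) ^ 2 \<noteq> (0 :: real fps)"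
    by (metis fps_X_neq_one fps_X_neq_zero mult_eq_0_iff power_eq_0_iff right_minus_eq zero_neq_numeral)
  show ?thesis
    unfolding rad cleared_denominator_eq[OF fps_series_last_gf_one_plus_X
        fps_series_slack_gf_one_plus_X fps_series_descent_gf_one_plus_X
        I_count_fps one_minus_X_mult_ones, symmetric]
    using fps_divide_times_eq[OF den] by simp
qed

end
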